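(* Fix $r\ge 2$ and integers $k_0,\dots,k_{r-2}\ge 3$. Then there exists a constant $C_{k_0,\dots,k_{r-2}}>0$ such that for all sufficiently large integers $u$, \[ S(r;k_0,\dots,k_{r-2},u) \le C_{k_0,\dots,k_{r-2}}\,\frac{u^{\sum_{i=0}^{r-2}(k_i-2)+1}}{(\log u)^{\sum_{i=0}^{r-2}(k_i-2)}}-1. \] In particular, for fixed integers $3\le s\le t$ there exists a constant $C_{s,t}>0$ such that for all sufficiently large $u$, \[ S(3;s,t,u)\le C_{s,t}\,\frac{u^{s+t-3}}{(\log u)^{s+t-4}}-1. \]
   Context: For an integer $k\ge 3$, let $\mathcal{L}(k)$ denote the equation $x_1+x_2+\cdots+x_{k-1}=x_k$ in positive integer variables (the $x_i$ need not be distinct). For $N\ge1$, write $[1,N]=\{1,2,\dots,N\}$. For integers $r\ge1$ and $k_0,\dots,k_{r-1}\ge 3$, the generalized Schur number $S(r;k_0,\dots,k_{r-1})$ is the least positive integer $N$ such that for every coloring $\Delta:[1,N]\to\{0,1,\dots,r-1\}$ there exist some $i\in\{0,\dots,r-1\}$ and positive integers $x_1,\dots,x_{k_i}\in[1,N]$ satisfying $\mathcal{L}(k_i)$ with $\Delta(x_1)=\cdots=\Delta(x_{k_i})=i$. *)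

theory Defs
  imports Complex_Main
begin

text \<open>Colours are 0..r-1; the list ks = [k_0,...,k_{r-1}] gives the equation lengths.
  A solution of L(k) is x_0,...,x_{k-1} (paper's x_1..x_k) with
  x_0 + ... + x_{k-2} = x_{k-1}.\<close>

definition schur_prop :: "nat list \<Rightarrow> nat \<Rightarrow> bool" where
  "schur_prop ks N \<longleftrightarrow>
     (\<forall>\<Delta> :: nat \<Rightarrow> nat. (\<forall>x\<in>{1..N}. \<Delta> x < length ks) \<longrightarrow>
        (\<exists>i < length ks. \<exists>x :: nat \<Rightarrow> nat.
            (\<forall>j < ks ! i. x j \<in> {1..N} \<and> \<Delta> (x j) = i) \<and>
            (\<Sum>j < ks ! i - 1. x j) = x (ks ! i - 1)))"

definition gen_schur :: "nat list \<Rightarrow> nat" where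
  "gen_schur ks = (LEAST N. N \<ge> 1 \<and> schur_prop ks N)"

end

theory Submission
  imports Defs "HOL-Library.Ramsey"
begin

(* S(r; k_0, ..., k_{r-2}, u) in fact grows at most linearly in u, and u <= u^(e+1) / (log u)^e
   for u >= 2.  Let M = S(2r-2; k_0, ..., k_{r-2}, k_0, ..., k_{r-2}), which exists by Ramsey's
   theorem applied to the colouring {p, q} |-> Delta |p - q| of pairs.  Given an r-colouring Delta
   of [1, (u-1) M], colour y in [1, M] by Delta y unless that is the last colour r-1, and otherwise
   by r-1 + Delta ((u-1) y).  If y and (u-1) y both have colour r-1, then y + ... + y = (u-1) y
   solves L(u) in that colour; otherwise a monochromatic solution for the auxiliary colouring,
   multiplied by u-1 in the shifted colours, is monochromatic for Delta. *)

lemma sum_lessThan_telescope_nat: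
  fixes a :: "nat \<Rightarrow> nat"
  assumes "mono_on {..n} a"
  shows "(\<Sum>j<n. a (Suc j) - a j) = a n - a 0"
  using assms
proof (induction n)
  case (Suc n)
  have "a 0 \<le> a n" and "a n \<le> a (Suc n)"
    using Suc.prems by (auto elim: mono_onD)
  moreover have "mono_on {..n} a"
    using Suc.prems by (rule mono_on_subset) auto
  ultimately show ?case
    using Suc.IH by simp
qed simp

definition has_solution :: "nat \<Rightarrow> nat set \<Rightarrow> bool" where
  "has_solution k A \<longleftrightarrow>
     (\<exists>x :: nat \<Rightarrow> nat. (\<forall>j < k. x j \<in> A) \<and> (\<Sum>j < k - 1. x j) = x (k - 1))"

lemma schur_prop_iff:
  "schur_prop ks N \<longleftrightarrow>
     (\<forall>\<Delta>. (\<forall>y\<in>{1..N}. \<Delta> y < length ks) \<longrightarrow>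
        (\<exists>i < length ks. has_solution (ks ! i) {y \<in> {1..N}. \<Delta> y = i}))"
  unfolding schur_prop_def has_solution_def by simp

lemma has_solution_mono:
  "has_solution k A \<Longrightarrow> A \<subseteq> B \<Longrightarrow> has_solution k B"
  unfolding has_solution_def by blast

lemma has_solution_scale:
  assumes "has_solution k A"
  shows "has_solution k ((*) c ` A)"
proof -
  obtain x where members: "\<forall>j < k. x j \<in> A" and sum: "(\<Sum>j < k - 1. x j) = x (k - 1)"
    using assms unfolding has_solution_def by blast
  have "(\<Sum>j < k - 1. c * x j) = c * x (k - 1)"
    by (simp only: sum_distrib_left[symmetric] sum)
  moreover have "\<forall>j < k. c * x j \<in> (*) c ` A"
    using members by blast
  ultimately show ?thesis
    unfolding has_solution_def by (intro exI[of _ "\<lambda>j. c * x j"]) simp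
qed

lemma has_solution_repeat:
  assumes "y \<in> A" and "(u - 1) * y \<in> A"
  shows "has_solution u A"
proof -
  define x where "x j = (if j < u - 1 then y else (u - 1) * y)" for j
  have "(\<Sum>j < u - 1. x j) = (\<Sum>j < u - 1. y)"
    by (rule sum.cong) (simp_all add: x_def)
  also have "\<dots> = x (u - 1)"
    by (simp add: x_def)
  finally have "(\<Sum>j < u - 1. x j) = x (u - 1)" .
  moreover have "\<forall>j < u. x j \<in> A"
    using assms by (simp add: x_def)
  ultimately show ?thesis
    unfolding has_solution_def by (intro exI[of _ x]) simp
qed

lemma has_solution_of_differences:
  fixes a :: "nat \<Rightarrow> nat"
  assumes k: "k \<ge> 2"
    and increasing: "\<And>p q. p < q \<Longrightarrow> q < k \<Longrightarrow> a p < a q"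
    and differences: "\<And>p q. p < q \<Longrightarrow> q < k \<Longrightarrow> a q - a p \<in> A"
  shows "has_solution k A"
proof -
  define x where "x j = (if j < k - 1 then a (Suc j) - a j else a (k - 1) - a 0)" for j
  have members: "x j \<in> A" if "j < k" for j
  proof (cases "j < k - 1")
    case True
    then show ?thesis
      using differences[of j "Suc j"] by (simp add: x_def)
  next
    case False
    then show ?thesis
      using that k differences[of 0 "k - 1"] by (simp add: x_def)
  qed
  have "(\<Sum>j < k - 1. x j) = (\<Sum>j < k - 1. a (Suc j) - a j)"
    by (rule sum.cong) (simp_all add: x_def)
  also have "\<dots> = a (k - 1) - a 0"
    by (rule sum_lessThan_telescope_nat)
      (use increasing in \<open>auto intro!: mono_onI simp: le_less\<close>)
  also have "\<dots> = x (k - 1)"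
    by (simp add: x_def)
  finally show ?thesis
    using members unfolding has_solution_def by (intro exI[of _ x]) simp
qed

lemma has_solution_of_nsets:
  fixes H :: "nat set"
  assumes "H \<in> [UNIV]\<^bsup>k\<^esup>" and "k \<ge> 2"
    and "\<And>p q. p \<in> H \<Longrightarrow> q \<in> H \<Longrightarrow> p < q \<Longrightarrow> q - p \<in> A"
  shows "has_solution k A"
proof -
  define a where "a = (!) (sorted_list_of_set H)"
  have fin: "finite H" and card: "card H = k"
    using assms(1) unfolding nsets_def by auto
  have "sorted_wrt (<) (sorted_list_of_set H)"
    by simp
  then have increasing: "a p < a q" if "p < q" "q < k" for p q
    using that fin card by (simp add: a_def sorted_wrt_iff_nth_less)
  have "a q \<in> H" if "q < k" for q
    using that fin card by (metis a_def length_sorted_list_of_set nth_mem set_sorted_list_of_set)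
  then show ?thesis
    using assms(2,3) increasing by (intro has_solution_of_differences[of k a]) auto
qed

lemma ex_schur_prop:
  assumes "\<forall>k\<in>set ks. k \<ge> 2"
  shows "\<exists>N \<ge> 1. schur_prop ks N"
proof -
  obtain N0 :: nat where "partn_lst {..<N0} ks 2"
    using ramsey_full[of ks 2] by blast
  then have ramsey: "partn_lst {..<Suc (Suc N0)} ks 2"
    by (rule partn_lst_greater_resource) simp
  have "schur_prop ks (Suc N0)"
    unfolding schur_prop_iff
  proof (intro allI impI)
    fix \<Delta> :: "nat \<Rightarrow> nat"
    assume colouring: "\<forall>y\<in>{1..Suc N0}. \<Delta> y < length ks"
    define f where "f e = \<Delta> (Max e - Min e)" for e :: "nat set"
    have f_pair: "f {p, q} = \<Delta> (q - p)" if "p < q" for p q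
      using that by (simp add: f_def)
    have "f {p, q} < length ks" if "p < q" and "q < Suc (Suc N0)" for p q
    proof -
      have "q - p \<in> {1..Suc N0}"
        using that by auto
      then show ?thesis
        using colouring f_pair[OF \<open>p < q\<close>] by simp
    qed
    then have "f \<in> [{..<Suc (Suc N0)}]\<^bsup>2\<^esup> \<rightarrow> {..<length ks}"
      unfolding ordered_nsets_2_eq by fastforce
    then obtain i where i: "i < length ks"
      and "monochromatic {..<Suc (Suc N0)} (ks ! i) 2 f i"
      using ramsey unfolding partn_lst_def by blast
    then obtain H where H: "H \<in> nsets {..<Suc (Suc N0)} (ks ! i)" and mono: "f ` [H]\<^bsup>2\<^esup> \<subseteq> {i}"
      unfolding monochromatic_def by blast
    have differences: "q - p \<in> {y \<in> {1..Suc N0}. \<Delta> y = i}"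
      if "p \<in> H" "q \<in> H" "p < q" for p q
    proof -
      have "{p, q} \<in> [H]\<^bsup>2\<^esup>"
        using that by (simp add: nsets_def)
      then have "f {p, q} = i"
        using mono by (meson image_subset_iff singletonD)
      then have "\<Delta> (q - p) = i"
        using f_pair[OF \<open>p < q\<close>] by simp
      moreover have "q < Suc (Suc N0)"
        using H that(2) by (auto simp: nsets_def)
      ultimately show ?thesis
        using \<open>p < q\<close> by auto
    qed
    have "H \<in> nsets UNIV (ks ! i)"
      using H by (auto simp: nsets_def)
    moreover have "ks ! i \<ge> 2"
      using i assms by simp
    ultimately have "has_solution (ks ! i) {y \<in> {1..Suc N0}. \<Delta> y = i}"
      using differences by (rule has_solution_of_nsets)
    then show "\<exists>i < length ks. has_solution (ks ! i) {y \<in> {1..Suc N0}. \<Delta> y = i}"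
      using i by blast
  qed
  then show ?thesis
    by (intro exI[of _ "Suc N0"]) simp
qed

lemma schur_prop_snoc:
  assumes doubled: "schur_prop (ks @ ks) M" and u: "u \<ge> 2"
  shows "schur_prop (ks @ [u]) ((u - 1) * M)"
  unfolding schur_prop_iff
proof (intro allI impI)
  fix \<Delta> :: "nat \<Rightarrow> nat"
  let ?r = "length ks"
  let ?class = "\<lambda>i. {y \<in> {1..(u - 1) * M}. \<Delta> y = i}"
  assume colouring: "\<forall>y\<in>{1..(u - 1) * M}. \<Delta> y < length (ks @ [u])"
  have small: "y \<in> {1..(u - 1) * M}" and scaled: "(u - 1) * y \<in> {1..(u - 1) * M}"
    if "y \<in> {1..M}" for y
  proof -
    have "1 \<le> u - 1"
      using u by simp
    then have "M \<le> (u - 1) * M"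
      using mult_le_mono1[of 1 "u - 1" M] by simp
    then show "y \<in> {1..(u - 1) * M}"
      using that by (meson atLeastAtMost_iff order_trans)
    show "(u - 1) * y \<in> {1..(u - 1) * M}"
      using that \<open>1 \<le> u - 1\<close> by auto
  qed
  show "\<exists>i < length (ks @ [u]). has_solution ((ks @ [u]) ! i) (?class i)"
  proof (cases "\<exists>y\<in>{1..M}. \<Delta> y = ?r \<and> \<Delta> ((u - 1) * y) = ?r")
    case True
    then obtain y where "y \<in> ?class ?r" and "(u - 1) * y \<in> ?class ?r"
      using small scaled by blast
    then show ?thesis
      by (intro exI[of _ ?r]) (simp add: has_solution_repeat)
  next
    case False
    define \<Gamma> where "\<Gamma> y = (if \<Delta> y < ?r then \<Delta> y else ?r + \<Delta> ((u - 1) * y))" for y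
    have "\<Gamma> y < length (ks @ ks)" if "y \<in> {1..M}" for y
    proof -
      have "\<Delta> y \<le> ?r" and "\<Delta> ((u - 1) * y) \<le> ?r"
        using colouring small[OF that] scaled[OF that] by fastforce+
      moreover have "\<Delta> y = ?r \<Longrightarrow> \<Delta> ((u - 1) * y) \<noteq> ?r"
        using False that by blast
      ultimately show ?thesis
        by (auto simp: \<Gamma>_def)
    qed
    then obtain i where i: "i < length (ks @ ks)"
      and sol: "has_solution ((ks @ ks) ! i) {y \<in> {1..M}. \<Gamma> y = i}"
      using doubled unfolding schur_prop_iff by blast
    show ?thesis
    proof (cases "i < ?r")
      case True
      have "{y \<in> {1..M}. \<Gamma> y = i} \<subseteq> ?class i"
        using True small by (auto simp: \<Gamma>_def split: if_splits)
      moreover have "(ks @ [u]) ! i = (ks @ ks) ! i"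
        using True by (simp add: nth_append)
      ultimately show ?thesis
        using True has_solution_mono[OF sol] by (intro exI[of _ i]) simp
    next
      case False
      have "(*) (u - 1) ` {y \<in> {1..M}. \<Gamma> y = i} \<subseteq> ?class (i - ?r)"
        using False scaled by (auto simp: \<Gamma>_def split: if_splits)
      moreover have "i - ?r < ?r"
        using False i by simp
      moreover have "(ks @ [u]) ! (i - ?r) = (ks @ ks) ! i"
        using False \<open>i - ?r < ?r\<close> by (simp add: nth_append)
      ultimately show ?thesis
        using has_solution_mono[OF has_solution_scale[OF sol, of "u - 1"]]
        by (intro exI[of _ "i - ?r"]) simp
    qed
  qed
qed

lemma gen_schur_le:
  "N \<ge> 1 \<Longrightarrow> schur_prop ks N \<Longrightarrow> gen_schur ks \<le> N"
  unfolding gen_schur_def by (rule Least_le) simp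

lemma gen_schur_snoc_linear:
  assumes "\<forall>k\<in>set ks. k \<ge> 2"
  obtains M where "\<And>u. u \<ge> 2 \<Longrightarrow> gen_schur (ks @ [u]) \<le> (u - 1) * M"
proof -
  obtain M where "M \<ge> 1" and "schur_prop (ks @ ks) M"
    using assms ex_schur_prop[of "ks @ ks"] by auto
  then have "gen_schur (ks @ [u]) \<le> (u - 1) * M" if "u \<ge> 2" for u
    using that by (intro gen_schur_le schur_prop_snoc) auto
  then show thesis
    using that by blast
qed

lemma le_power_div_ln_power:
  fixes x :: real
  assumes "x > 1"
  shows "x \<le> x ^ (e + 1) / ln x ^ e"
proof -
  have "0 < ln x" and "ln x \<le> x"
    using assms ln_le_minus_one[of x] by auto
  then have "ln x ^ e \<le> x ^ e" and "0 < ln x ^ e"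
    by (simp_all add: power_mono less_imp_le)
  then have "x * ln x ^ e \<le> x ^ (e + 1)"
    using assms by (simp add: mult_left_mono)
  then show ?thesis
    using \<open>0 < ln x ^ e\<close> by (simp add: pos_le_divide_eq)
qed

lemma gen_schur_snoc_bound:
  assumes "\<forall>k\<in>set ks. k \<ge> 2"
  shows "\<exists>C > 0. \<forall>\<^sub>F u in at_top.
           real (gen_schur (ks @ [u])) \<le> C * real u ^ (e + 1) / ln (real u) ^ e - 1"
proof -
  obtain M where M: "\<And>u. u \<ge> 2 \<Longrightarrow> gen_schur (ks @ [u]) \<le> (u - 1) * M"
    using gen_schur_snoc_linear assms by blast
  have "real (gen_schur (ks @ [u])) \<le> real (M + 1) * real u ^ (e + 1) / ln (real u) ^ e - 1"
    if "u \<ge> 2" for u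
  proof -
    have "real (gen_schur (ks @ [u])) \<le> real ((u - 1) * M)"
      using M[OF that] by linarith
    also have "\<dots> \<le> real (M + 1) * real u - 1"
      using that by (simp add: of_nat_diff algebra_simps)
    also have "\<dots> \<le> real (M + 1) * (real u ^ (e + 1) / ln (real u) ^ e) - 1"
      using mult_left_mono[OF le_power_div_ln_power[of "real u" e], of "real (M + 1)"] that
      by simp
    finally show ?thesis
      by simp
  qed
  then show ?thesis
    by (intro exI[of _ "real (M + 1)"]) (auto simp: eventually_at_top_linorder)
qed

theorem corollary2:
  shows "(\<forall>ks :: nat list. ks \<noteq> [] \<longrightarrow> (\<forall>k\<in>set ks. k \<ge> 3) \<longrightarrow>
           (\<exists>C :: real. C > 0 \<and>
              (\<forall>\<^sub>F u in at_top.
                 real (gen_schur (ks @ [u])) \<le>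
                   C * real u ^ (sum_list (map (\<lambda>k. k - 2) ks) + 1)
                     / ln (real u) ^ sum_list (map (\<lambda>k. k - 2) ks) - 1)))
       \<and> (\<forall>s t :: nat. 3 \<le> s \<longrightarrow> s \<le> t \<longrightarrow>
           (\<exists>C :: real. C > 0 \<and>
              (\<forall>\<^sub>F u in at_top.
                 real (gen_schur [s, t, u]) \<le>
                   C * real u ^ (s + t - 3) / ln (real u) ^ (s + t - 4) - 1)))"
proof (intro conjI allI impI)
  fix ks :: "nat list"
  assume "\<forall>k\<in>set ks. k \<ge> 3"
  then show "\<exists>C :: real. C > 0 \<and>
              (\<forall>\<^sub>F u in at_top.
                 real (gen_schur (ks @ [u])) \<le>
                   C * real u ^ (sum_list (map (\<lambda>k. k - 2) ks) + 1)
                     / ln (real u) ^ sum_list (map (\<lambda>k. k - 2) ks) - 1)"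
    by (intro gen_schur_snoc_bound) auto
next
  fix s t :: nat
  assume "3 \<le> s" "s \<le> t"
  then have "s + t - 3 = (s + t - 4) + 1"
    by simp
  moreover have "\<exists>C > 0. \<forall>\<^sub>F u in at_top.
      real (gen_schur ([s, t] @ [u])) \<le> C * real u ^ (s + t - 4 + 1) / ln (real u) ^ (s + t - 4) - 1"
    using \<open>3 \<le> s\<close> \<open>s \<le> t\<close> by (intro gen_schur_snoc_bound) auto
  ultimately show "\<exists>C :: real. C > 0 \<and>
              (\<forall>\<^sub>F u in at_top.
                 real (gen_schur [s, t, u]) \<le>
                   C * real u ^ (s + t - 3) / ln (real u) ^ (s + t - 4) - 1)"
    by simp
qed

end
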